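(* Let $1\leq s\leq r\leq n$ and $d=n+r+2$. For a general $n$-tuple $(A_1,\dots,A_n)\in X^{n,r,s}$, the corresponding local algebra has socle dimension $r-s+1$; equivalently $\dim_{\mathbb{K}}\bigcap_{i=1}^n\ker A_i=r-s+1$.
   Context: $\mathbb{K}$ is algebraically closed of characteristic zero. $X^{n,r,s}$ is the set of $n$-tuples $(A_1,\dots,A_n)$ of pairwise commuting $d\times d$ matrices over $\mathbb{K}$ for which there is a basis of $\mathbb{K}^d$ in which each $A_i$ has the block form $$A_i=\begin{bmatrix}0 & b_i^T & c_i^T & 0\\ 0&0&D_i&0\\ 0&0&0&f_i\\ 0&0&0&0\end{bmatrix}$$ with diagonal blocks of sizes $1,r,n,1$, where $b_i\in\mathbb{K}^r$, $c_i,f_i\in\mathbb{K}^n$, $D_i\in\mathbb{K}^{r\times n}$, such that $f_1,\dots,f_n$ are linearly independent, $\bigcap_i\ker D_i^T=0$, and $\dim\operatorname{Span}\{b_1,\dots,b_n\}=s$. Such a tuple has a cyclic vector $v$ (the last basis vector) and corresponds to the local algebra $R/I$, $R=\mathbb{K}[\alpha_1,\dots,\alpha_n]$, where $I$ is the kernel of $f\mapsto f(A_1,\dots,A_n)v$; its socle dimension equals $\dim\bigcap_i\ker A_i$. "General" means: for all tuples in a nonempty open subset of $X^{n,r,s}$. *)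

theory Defs
  imports "Jordan_Normal_Form.Matrix_Kernel" "Jordan_Normal_Form.VS_Connect"
          "HOL-Computational_Algebra.Polynomial"
begin

definition subspace_dim :: "nat \<Rightarrow> 'a::field vec set \<Rightarrow> nat" where
  "subspace_dim m W = vectorspace.dim class_ring ((module_vec TYPE('a) m)\<lparr>carrier := W\<rparr>)"

definition vspan :: "nat \<Rightarrow> 'a::field vec set \<Rightarrow> 'a vec set" where
  "vspan m S = LinearCombinations.module.span class_ring (module_vec TYPE('a) m) S"

definition lin_indep_family :: "nat \<Rightarrow> 'a::field vec list \<Rightarrow> bool" where
  "lin_indep_family m vs \<longleftrightarrow> set vs \<subseteq> carrier_vec m \<and> distinct vs \<and>
     \<not> LinearCombinations.module.lin_dep class_ring (module_vec TYPE('a) m) (set vs)"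

text \<open>Indices 0..d-1 with d = n+r+2: block 1 = {0}, block 2 = {1..r},
  block 3 = {r+1..r+n}, block 4 = {r+n+1}.\<close>

definition block_shape :: "nat \<Rightarrow> nat \<Rightarrow> 'a::field mat \<Rightarrow> bool" where
  "block_shape n r B \<longleftrightarrow> B \<in> carrier_mat (n+r+2) (n+r+2) \<and>
     (\<forall>j<n+r+2. \<forall>k<n+r+2. B $$ (j,k) \<noteq> 0 \<longrightarrow>
        (j = 0 \<and> 1 \<le> k \<and> k \<le> r + n) \<or>
        (1 \<le> j \<and> j \<le> r \<and> r + 1 \<le> k \<and> k \<le> r + n) \<or>
        (r + 1 \<le> j \<and> j \<le> r + n \<and> k = r + n + 1))"

definition blk_b :: "nat \<Rightarrow> nat \<Rightarrow> 'a::field mat \<Rightarrow> 'a vec" where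
  "blk_b n r B = vec r (\<lambda>k. B $$ (0, 1 + k))"

definition blk_c :: "nat \<Rightarrow> nat \<Rightarrow> 'a::field mat \<Rightarrow> 'a vec" where
  "blk_c n r B = vec n (\<lambda>k. B $$ (0, r + 1 + k))"

definition blk_D :: "nat \<Rightarrow> nat \<Rightarrow> 'a::field mat \<Rightarrow> 'a mat" where
  "blk_D n r B = mat r n (\<lambda>(j,k). B $$ (1 + j, r + 1 + k))"

definition blk_f :: "nat \<Rightarrow> nat \<Rightarrow> 'a::field mat \<Rightarrow> 'a vec" where
  "blk_f n r B = vec n (\<lambda>k. B $$ (r + 1 + k, r + n + 1))"

definition commuting_tuple :: "'a::field mat list \<Rightarrow> bool" where
  "commuting_tuple As \<longleftrightarrow> (\<forall>i<length As. \<forall>j<length As. As!i * As!j = As!j * As!i)"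

definition X_nrs :: "nat \<Rightarrow> nat \<Rightarrow> nat \<Rightarrow> 'a::field mat list set" where
  "X_nrs n r s = {As. length As = n \<and>
     (\<forall>i<n. As!i \<in> carrier_mat (n+r+2) (n+r+2)) \<and> commuting_tuple As \<and>
     (\<exists>P Pinv. P \<in> carrier_mat (n+r+2) (n+r+2) \<and> Pinv \<in> carrier_mat (n+r+2) (n+r+2) \<and>
        P * Pinv = 1\<^sub>m (n+r+2) \<and> Pinv * P = 1\<^sub>m (n+r+2) \<and>
        (let Bs = map (\<lambda>A. Pinv * A * P) As in
          (\<forall>i<n. block_shape n r (Bs!i)) \<and>
          lin_indep_family n (map (blk_f n r) Bs) \<and>
          (\<Inter>i\<in>{..<n}. mat_kernel (transpose_mat (blk_D n r (Bs!i)))) = {0\<^sub>v r} \<and>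
          subspace_dim r (vspan r (set (map (blk_b n r) Bs))) = s))}"

inductive_set polyfun :: "(('v \<Rightarrow> 'a::comm_ring_1) \<Rightarrow> 'a) set" where
  const: "(\<lambda>x. c) \<in> polyfun"
| var: "(\<lambda>x. x v) \<in> polyfun"
| add: "p \<in> polyfun \<Longrightarrow> q \<in> polyfun \<Longrightarrow> (\<lambda>x. p x + q x) \<in> polyfun"
| mult: "p \<in> polyfun \<Longrightarrow> q \<in> polyfun \<Longrightarrow> (\<lambda>x. p x * q x) \<in> polyfun"

definition zariski_open :: "(('v \<Rightarrow> 'a::comm_ring_1)) set \<Rightarrow> bool" where
  "zariski_open U \<longleftrightarrow> (\<exists>S \<subseteq> polyfun. U = {x. \<exists>p\<in>S. p x \<noteq> 0})"

definition tuple_coords :: "nat \<Rightarrow> nat \<Rightarrow> 'a::zero mat list \<Rightarrow> (nat \<times> nat \<times> nat \<Rightarrow> 'a)" where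
  "tuple_coords n d As = (\<lambda>(i,j,k). if i < n \<and> j < d \<and> k < d then As!i $$ (j,k) else 0)"

definition holds_generally :: "nat \<Rightarrow> nat \<Rightarrow> 'a::comm_ring_1 mat list set \<Rightarrow> ('a mat list \<Rightarrow> bool) \<Rightarrow> bool" where
  "holds_generally n d Y P \<longleftrightarrow> (\<exists>U. zariski_open U \<and>
      (\<exists>As\<in>Y. tuple_coords n d As \<in> U) \<and>
      (\<forall>As\<in>Y. tuple_coords n d As \<in> U \<longrightarrow> P As))"

end

(*
  The common kernel W of A_1, ..., A_n is the kernel of the stacked (n d) x d matrix. Choose n+s+1
  of its rows and its columns 1, ..., s, r+1, ..., r+n+1: the determinant of this minor is a
  polynomial in the entries, so its non-vanishing is a Zariski open condition, and it holds for an
  explicit tuple of X^{n,r,s}, on which the minor is the identity. Where the minor is nonsingular,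
  a vector of W is determined by its r+1-s remaining coordinates 0, s+1, ..., r, so dim W <= r+1-s.
  Conversely, for every tuple of X^{n,r,s}, written in the block basis, each vector supported on
  the coordinates 0, ..., r whose coordinates 1, ..., r are orthogonal to b_1, ..., b_n lies in all
  kernels; these vectors are cut out by s+n+1 linear equations, so dim W >= r+1-s.
*)

theory Submission
  imports Defs "Jordan_Normal_Form.DL_Rank"
begin

section \<open>Subspaces of K^n and their dimension\<close>

lemma subspace_vec_iff:
  "subspace class_ring X (module_vec TYPE('a::field) N) \<longleftrightarrow>
     X \<subseteq> carrier_vec N \<and> 0\<^sub>v N \<in> X \<and> (\<forall>v\<in>X. \<forall>w\<in>X. v + w \<in> X) \<and> (\<forall>c. \<forall>v\<in>X. c \<cdot>\<^sub>v v \<in> X)"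
  unfolding subspace_def LinearCombinations.submodule_def
  using vec_vs[of N] vec_module[of N] by (auto simp: module_vec_simps class_ring_simps)

lemma fin_dim_subspace_vec:
  fixes X :: "'a::field vec set"
  assumes sub: "subspace class_ring X (module_vec TYPE('a) N)"
  shows "vectorspace.fin_dim class_ring ((module_vec TYPE('a) N)\<lparr>carrier := X\<rparr>)"
proof -
  interpret vec_space "TYPE('a)" N .
  interpret X: vectorspace class_ring "vs X" using subspace_is_vs[OF sub] .
  have subm: "LinearCombinations.submodule class_ring X V" using sub unfolding subspace_def by auto
  have li_bounded: "finite S \<and> card S \<le> N" if "S \<subseteq> carrier (vs X) \<and> X.lin_indpt S" for S
  proof -
    have "S \<subseteq> X" "X.lin_indpt S" using that by auto
    then have li: "lin_indpt S" using span_li_not_depend(2)[OF _ subm] by auto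
    have SV: "S \<subseteq> carrier_vec N" using \<open>S \<subseteq> X\<close> subm unfolding LinearCombinations.submodule_def by auto
    show ?thesis using li_le_dim[OF fin_dim SV li] dim_is_n by auto
  qed
  have "{} \<subseteq> carrier (vs X) \<and> X.lin_indpt {}" by (simp add: X.lin_dep_def)
  then obtain B where "finite B" "maximal B (\<lambda>S. S \<subseteq> carrier (vs X) \<and> X.lin_indpt S)"
    using maximal_exists[of "\<lambda>S. S \<subseteq> carrier (vs X) \<and> X.lin_indpt S" N "{}", OF li_bounded] by blast
  then have "X.basis B" by (intro X.max_li_is_basis)
  then show ?thesis unfolding X.fin_dim_def X.basis_def using \<open>finite B\<close> by auto
qed

lemma subspace_dim_mono:
  fixes X W :: "'a::field vec set"
  assumes sX: "subspace class_ring X (module_vec TYPE('a) N)"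
    and sW: "subspace class_ring W (module_vec TYPE('a) N)" and "X \<subseteq> W"
  shows "subspace_dim N X \<le> subspace_dim N W"
proof -
  interpret vec_space "TYPE('a)" N .
  interpret W: vectorspace class_ring "vs W" using subspace_is_vs[OF sW] .
  have "subspace class_ring X (vs W)" by (rule nested_subspaces[OF sW sX \<open>X \<subseteq> W\<close>])
  from W.subspace_dim[OF this fin_dim_subspace_vec[OF sW]] fin_dim_subspace_vec[OF sX]
  show ?thesis unfolding subspace_dim_def by simp
qed

lemma subspace_dim_carrier_vec: "subspace_dim N (carrier_vec N :: 'a::field vec set) = N"
proof -
  interpret vec_space "TYPE('a)" N .
  have V: "module_vec TYPE('a) N\<lparr>carrier := carrier_vec N\<rparr> = module_vec TYPE('a) N"
    by (simp add: module_vec_def)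
  show ?thesis unfolding subspace_dim_def V using dim_is_n by simp
qed

lemma subspace_vec_image:
  fixes V :: "'a::field vec set" and T :: "'a vec \<Rightarrow> 'a vec"
  assumes sV: "subspace class_ring V (module_vec TYPE('a) N)"
    and maps: "\<And>v. v \<in> V \<Longrightarrow> T v \<in> carrier_vec M"
    and add: "\<And>v w. v \<in> V \<Longrightarrow> w \<in> V \<Longrightarrow> T (v + w) = T v + T w"
    and smult: "\<And>c v. v \<in> V \<Longrightarrow> T (c \<cdot>\<^sub>v v) = c \<cdot>\<^sub>v T v"
  shows "subspace class_ring (T ` V) (module_vec TYPE('a) M)"
  unfolding subspace_vec_iff
proof (intro conjI ballI allI)
  have V0: "0\<^sub>v N \<in> V" and V_add: "\<And>v w. v \<in> V \<Longrightarrow> w \<in> V \<Longrightarrow> v + w \<in> V"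
    and V_smult: "\<And>c v. v \<in> V \<Longrightarrow> c \<cdot>\<^sub>v v \<in> V"
    using sV unfolding subspace_vec_iff by blast+
  show "T ` V \<subseteq> carrier_vec M" using maps by blast
  have zero: "(0 :: 'a) \<cdot>\<^sub>v 0\<^sub>v N = 0\<^sub>v N" by (intro eq_vecI) simp_all
  have "T (0\<^sub>v N) = 0 \<cdot>\<^sub>v T (0\<^sub>v N)" using smult[OF V0, of 0] unfolding zero .
  also have "\<dots> = 0\<^sub>v M" using maps[OF V0] by (intro eq_vecI) simp_all
  finally have T0: "T (0\<^sub>v N) = 0\<^sub>v M" .
  show "0\<^sub>v M \<in> T ` V" unfolding T0[symmetric] using V0 by (rule imageI)
  show "x + y \<in> T ` V" if xy: "x \<in> T ` V" "y \<in> T ` V" for x y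
  proof -
    obtain v w where "v \<in> V" "w \<in> V" "x = T v" "y = T w" using xy by blast
    then have "x + y = T (v + w)" "v + w \<in> V" using add V_add by simp_all
    then show ?thesis by blast
  qed
  show "c \<cdot>\<^sub>v x \<in> T ` V" if x: "x \<in> T ` V" for c x
  proof -
    obtain v where "v \<in> V" "x = T v" using x by blast
    then have "c \<cdot>\<^sub>v x = T (c \<cdot>\<^sub>v v)" "c \<cdot>\<^sub>v v \<in> V" using smult V_smult by simp_all
    then show ?thesis by blast
  qed
qed

lemma subspace_dim_le_of_linear_inj:
  fixes V W :: "'a::field vec set" and T :: "'a vec \<Rightarrow> 'a vec"
  assumes sV: "subspace class_ring V (module_vec TYPE('a) N)"
    and sW: "subspace class_ring W (module_vec TYPE('a) M)"
    and maps: "\<And>v. v \<in> V \<Longrightarrow> T v \<in> W"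
    and add: "\<And>v w. v \<in> V \<Longrightarrow> w \<in> V \<Longrightarrow> T (v + w) = T v + T w"
    and smult: "\<And>c v. v \<in> V \<Longrightarrow> T (c \<cdot>\<^sub>v v) = c \<cdot>\<^sub>v T v"
    and inj: "inj_on T V"
  shows "subspace_dim N V \<le> subspace_dim M W"
proof -
  interpret NV: vec_space "TYPE('a)" N .
  interpret MV: vec_space "TYPE('a)" M .
  have vV: "vectorspace class_ring (NV.vs V)" and vW: "vectorspace class_ring (MV.vs W)"
    using NV.subspace_is_vs[OF sV] MV.subspace_is_vs[OF sW] .
  interpret L: linear_map class_ring "NV.vs V" "MV.vs W" T
    unfolding linear_map_def mod_hom_def mod_hom_axioms_def LinearCombinations.module_hom_def
    using vV vW maps add smult by (auto simp: vectorspace_def)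
  have "W \<subseteq> carrier_vec M" using sW unfolding subspace_vec_iff by blast
  then have sTV: "subspace class_ring (T ` V) (module_vec TYPE('a) M)"
    by (intro subspace_vec_image[OF sV _ add smult]) (use maps in blast)
  have "vectorspace.dim class_ring (L.W.vs L.imT) + vectorspace.dim class_ring (L.V.vs L.kerT) = L.V.dim"
    by (rule L.rank_nullity[OF fin_dim_subspace_vec[OF sV]])
  moreover have "vectorspace.dim class_ring (L.V.vs L.kerT) = 0"
    by (rule L.inj_imp_dim_ker0) (use inj in simp)
  moreover have "L.V.dim = subspace_dim N V"
    and "vectorspace.dim class_ring (L.W.vs L.imT) = subspace_dim M (T ` V)"
    unfolding subspace_dim_def L.im_def by simp_all
  moreover have "subspace_dim M (T ` V) \<le> subspace_dim M W"
    by (rule subspace_dim_mono[OF sTV sW]) (use maps in blast)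
  ultimately show ?thesis by linarith
qed

lemma subspace_dim_le_of_coordinates:
  fixes W :: "'a::field vec set" and c :: "nat \<Rightarrow> nat"
  assumes sW: "subspace class_ring W (module_vec TYPE('a) d)"
    and c: "\<And>t. t < e \<Longrightarrow> c t < d"
    and determined: "\<And>w. w \<in> W \<Longrightarrow> (\<And>t. t < e \<Longrightarrow> w $ c t = 0) \<Longrightarrow> w = 0\<^sub>v d"
  shows "subspace_dim d W \<le> e"
proof -
  have Wc: "W \<subseteq> carrier_vec d" and add: "\<And>v w. v \<in> W \<Longrightarrow> w \<in> W \<Longrightarrow> v + w \<in> W"
    and smult: "\<And>a v. v \<in> W \<Longrightarrow> a \<cdot>\<^sub>v v \<in> W"
    using sW unfolding subspace_vec_iff by blast+
  define T where "T = (\<lambda>v :: 'a vec. vec e (\<lambda>t. v $ c t))"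
  have "subspace_dim d W \<le> subspace_dim e (carrier_vec e :: 'a vec set)"
  proof (rule subspace_dim_le_of_linear_inj[OF sW])
    show "subspace class_ring (carrier_vec e) (module_vec TYPE('a) e)"
      unfolding subspace_vec_iff by simp
    show "T v \<in> carrier_vec e" for v unfolding T_def by simp
    show "T (v + w) = T v + T w" if "v \<in> W" "w \<in> W" for v w
      using that Wc c unfolding T_def by (intro eq_vecI) auto
    show "T (a \<cdot>\<^sub>v v) = a \<cdot>\<^sub>v T v" if "v \<in> W" for a v
      using that Wc c unfolding T_def by (intro eq_vecI) auto
    show "inj_on T W"
    proof (rule inj_onI)
      fix v w assume v: "v \<in> W" and w: "w \<in> W" and "T v = T w"
      have vc: "v \<in> carrier_vec d" and wc: "w \<in> carrier_vec d" using v w Wc by auto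
      define z where "z = v + (-1) \<cdot>\<^sub>v w"
      have "z = 0\<^sub>v d"
      proof (rule determined)
        show "z \<in> W" unfolding z_def using add[OF v smult[OF w]] .
        fix t assume t: "t < e"
        have "v $ c t = w $ c t" using arg_cong[OF \<open>T v = T w\<close>, of "\<lambda>x. x $ t"] t
          unfolding T_def by simp
        then show "z $ c t = 0" unfolding z_def using vc wc c[OF t] by simp
      qed
      then show "v = w"
      proof (intro eq_vecI)
        fix i assume "i < dim_vec w"
        then have "z $ i = 0" "i < d" using \<open>z = 0\<^sub>v d\<close> wc by auto
        then show "v $ i = w $ i" unfolding z_def using vc wc by simp
      qed (use vc wc in simp)
    qed
  qed
  then show ?thesis using subspace_dim_carrier_vec[where N = e and 'a = 'a] by simp
qed

lemma subspace_mat_kernel: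
  fixes A :: "'a::field mat"
  assumes A: "A \<in> carrier_mat nr nc"
  shows "subspace class_ring (mat_kernel A) (module_vec TYPE('a) nc)"
  unfolding subspace_vec_iff
proof (intro conjI ballI allI)
  show "mat_kernel A \<subseteq> carrier_vec nc" by (rule mat_kernel_carrier[OF A])
  show "0\<^sub>v nc \<in> mat_kernel A" by (rule mat_kernelI[OF A]) (use A in auto)
  fix v assume v: "v \<in> mat_kernel A"
  note v' = mat_kernelD[OF A v]
  show "c \<cdot>\<^sub>v v \<in> mat_kernel A" for c
  proof (rule mat_kernelI[OF A])
    show "c \<cdot>\<^sub>v v \<in> carrier_vec nc" using v'(1) by simp
    have "A *\<^sub>v (c \<cdot>\<^sub>v v) = c \<cdot>\<^sub>v (A *\<^sub>v v)" by (rule mult_mat_vec[OF A v'(1)])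
    also have "\<dots> = 0\<^sub>v nr" unfolding v'(2) by (intro eq_vecI) simp_all
    finally show "A *\<^sub>v (c \<cdot>\<^sub>v v) = 0\<^sub>v nr" .
  qed
  fix w assume w: "w \<in> mat_kernel A"
  note w' = mat_kernelD[OF A w]
  show "v + w \<in> mat_kernel A"
  proof (rule mat_kernelI[OF A])
    show "v + w \<in> carrier_vec nc" using v'(1) w'(1) by simp
    show "A *\<^sub>v (v + w) = 0\<^sub>v nr"
      using mult_add_distrib_mat_vec[OF A v'(1) w'(1)] v'(2) w'(2) by simp
  qed
qed

lemma subspace_vec_INT:
  fixes X :: "'i \<Rightarrow> 'a::field vec set"
  assumes "i0 \<in> I" and sub: "\<And>i. i \<in> I \<Longrightarrow> subspace class_ring (X i) (module_vec TYPE('a) N)"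
  shows "subspace class_ring (\<Inter>i\<in>I. X i) (module_vec TYPE('a) N)"
  unfolding subspace_vec_iff
proof (intro conjI ballI allI)
  note X = sub[unfolded subspace_vec_iff]
  have "(\<Inter>i\<in>I. X i) \<subseteq> X i0" using \<open>i0 \<in> I\<close> by (rule INT_lower)
  also have "\<dots> \<subseteq> carrier_vec N" using X[OF \<open>i0 \<in> I\<close>] by (rule conjunct1)
  finally show "(\<Inter>i\<in>I. X i) \<subseteq> carrier_vec N" .
  show "0\<^sub>v N \<in> (\<Inter>i\<in>I. X i)"
  proof (rule INT_I)
    fix i assume "i \<in> I"
    from X[OF this] show "0\<^sub>v N \<in> X i" by (elim conjE)
  qed
  fix v assume v: "v \<in> (\<Inter>i\<in>I. X i)"
  show "c \<cdot>\<^sub>v v \<in> (\<Inter>i\<in>I. X i)" for c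
  proof (rule INT_I)
    fix i assume i: "i \<in> I"
    from X[OF i] have "\<forall>c. \<forall>v\<in>X i. c \<cdot>\<^sub>v v \<in> X i" by (elim conjE)
    then show "c \<cdot>\<^sub>v v \<in> X i" using INT_D[OF v i] by blast
  qed
  fix w assume w: "w \<in> (\<Inter>i\<in>I. X i)"
  show "v + w \<in> (\<Inter>i\<in>I. X i)"
  proof (rule INT_I)
    fix i assume i: "i \<in> I"
    from X[OF i] have "\<forall>v\<in>X i. \<forall>w\<in>X i. v + w \<in> X i" by (elim conjE)
    then show "v + w \<in> X i" using INT_D[OF v i] INT_D[OF w i] by blast
  qed
qed

lemma subspace_common_kernel:
  fixes A :: "'i \<Rightarrow> 'a::field mat"
  assumes "i0 \<in> I" and A: "\<And>i. i \<in> I \<Longrightarrow> A i \<in> carrier_mat nr d"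
  shows "subspace class_ring (\<Inter>i\<in>I. mat_kernel (A i)) (module_vec TYPE('a) d)"
  by (rule subspace_vec_INT[OF \<open>i0 \<in> I\<close> subspace_mat_kernel[OF A]])

lemma mat_kernel_dim_ge:
  fixes A :: "'a::field mat"
  assumes A: "A \<in> carrier_mat nr nc"
  shows "nc - nr \<le> subspace_dim nc (mat_kernel A)"
proof -
  interpret K: kernel nr nc A by (unfold_locales, rule A)
  define C where "C = gauss_jordan_single A"
  have C: "C \<in> carrier_mat nr nc" "row_echelon_form C"
    using gauss_jordan_single[OF A C_def[symmetric]] by auto
  then obtain f where f: "pivot_fun C f nc" unfolding row_echelon_form_def by auto
  have "length (pivot_positions C) = card {i. i < nr \<and> row C i \<noteq> 0\<^sub>v nc}"
    using pivot_positions(4)[OF C(1) f] .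
  also have "\<dots> \<le> nr" by (rule order.trans[OF card_mono[of "{..<nr}"]]) auto
  finally have "nc - nr \<le> kernel_dim A" unfolding kernel_dim_code C_def[symmetric] using A by auto
  also have "kernel_dim A = subspace_dim nc (mat_kernel A)"
    unfolding K.kernel_dim subspace_dim_def by simp
  finally show ?thesis .
qed

lemma mat_kernel_mat_of_rows:
  fixes ws :: "'a::field vec list"
  assumes "set ws \<subseteq> carrier_vec d"
  shows "mat_kernel (mat_of_rows d ws) = {v \<in> carrier_vec d. \<forall>w\<in>set ws. w \<bullet> v = 0}"
proof -
  have "row (mat_of_rows d ws) i = ws ! i" if "i < length ws" for i
    using assms that by (simp add: subsetD)
  then show ?thesis
    unfolding mat_kernel[OF mat_of_rows_carrier(1)]
    by (auto simp: vec_eq_iff all_set_conv_all_nth)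
qed

lemma orthogonal_vspan:
  fixes B :: "'a::field vec set"
  assumes B: "B \<subseteq> carrier_vec N" and u: "u \<in> carrier_vec N" and orth: "\<And>b. b \<in> B \<Longrightarrow> b \<bullet> u = 0"
    and v: "v \<in> vspan N B"
  shows "v \<bullet> u = 0"
proof -
  interpret vec_space "TYPE('a)" N .
  have "u \<in> orthogonal_complement B"
    unfolding orthogonal_complement_def using B u orth by (auto simp: comm_scalar_prod[OF u])
  then have "u \<in> orthogonal_complement (span B)" using in_orthogonal_complement_span[OF B] by simp
  then have "u \<bullet> v = 0" using v unfolding orthogonal_complement_def vspan_def by blast
  moreover have "v \<in> carrier_vec N" using span_closed[OF B] v unfolding vspan_def by simp
  ultimately show ?thesis using comm_scalar_prod[OF u] by simp
qed

lemma vspan_basis_list: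
  fixes S :: "'a::field vec set"
  assumes "finite S" and S: "S \<subseteq> carrier_vec N"
  obtains bs where "set bs \<subseteq> carrier_vec N" "length bs = subspace_dim N (vspan N S)"
    "vspan N (set bs) = vspan N S"
proof -
  interpret vec_space "TYPE('a)" N .
  have sub: "subspace class_ring (span S) V" by (rule span_is_subspace[OF S])
  interpret SP: vectorspace class_ring "vs (span S)" by (rule subspace_is_vs[OF sub])
  have "SP.fin_dim" using fin_dim_span[OF \<open>finite S\<close>] S by simp
  then obtain B where "finite B" "SP.basis B" using SP.finite_basis_exists by blast
  then have card: "card B = subspace_dim N (vspan N S)"
    using SP.dim_basis unfolding subspace_dim_def vspan_def by simp
  have "B \<subseteq> span S" using \<open>SP.basis B\<close> unfolding SP.basis_def by simp
  then have B: "B \<subseteq> carrier_vec N" using span_closed[OF S] by auto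
  have "span B = span S"
    using \<open>SP.basis B\<close> span_li_not_depend(1)[OF \<open>B \<subseteq> span S\<close>] sub
    unfolding SP.basis_def subspace_def by simp
  obtain bs where "set bs = B" "distinct bs" using finite_distinct_list[OF \<open>finite B\<close>] by blast
  with that B card \<open>span B = span S\<close> show ?thesis
    using distinct_card unfolding vspan_def by metis
qed

section \<open>Common kernels of tuples of matrices\<close>

definition tuple_minor :: "'a mat list \<Rightarrow> (nat \<Rightarrow> nat) \<Rightarrow> (nat \<Rightarrow> nat) \<Rightarrow> (nat \<Rightarrow> nat) \<Rightarrow> nat \<Rightarrow> 'a mat"
  where "tuple_minor As mi ri ci m = mat m m (\<lambda>(a, b). As ! mi a $$ (ri a, ci b))"

lemma common_kernel_eq_0_of_vanishing_off_minor:
  fixes As :: "'a::field mat list"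
  assumes car: "\<And>i. i < n \<Longrightarrow> As ! i \<in> carrier_mat d d"
    and mi: "\<And>a. a < m \<Longrightarrow> mi a < n" and ri: "\<And>a. a < m \<Longrightarrow> ri a < d"
    and ci: "\<And>b. b < m \<Longrightarrow> ci b < d" and inj: "inj_on ci {..<m}"
    and nonsingular: "det (tuple_minor As mi ri ci m) \<noteq> 0"
    and z: "z \<in> carrier_vec d" and ker: "\<And>i. i < n \<Longrightarrow> As ! i *\<^sub>v z = 0\<^sub>v d"
    and off: "\<And>j. j < d \<Longrightarrow> j \<notin> ci ` {..<m} \<Longrightarrow> z $ j = 0"
  shows "z = 0\<^sub>v d"
proof -
  define M where "M = tuple_minor As mi ri ci m"
  have M: "M \<in> carrier_mat m m" unfolding M_def tuple_minor_def by simp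
  define y where "y = vec m (\<lambda>b. z $ ci b)"
  have y: "y \<in> carrier_vec m" unfolding y_def by simp
  have "M *\<^sub>v y = 0\<^sub>v m"
  proof (rule eq_vecI)
    fix a assume "a < dim_vec (0\<^sub>v m :: 'a vec)"
    then have a: "a < m" by simp
    let ?A = "As ! mi a"
    have "(M *\<^sub>v y) $ a = (\<Sum>b<m. ?A $$ (ri a, ci b) * z $ ci b)"
      using a unfolding M_def tuple_minor_def y_def by (simp add: scalar_prod_def lessThan_atLeast0)
    also have "\<dots> = (\<Sum>j\<in>ci ` {..<m}. ?A $$ (ri a, j) * z $ j)"
      by (simp add: sum.reindex[OF inj])
    also have "\<dots> = (\<Sum>j<d. ?A $$ (ri a, j) * z $ j)"
      by (rule sum.mono_neutral_left) (use ci off in auto)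
    also have "\<dots> = (?A *\<^sub>v z) $ ri a"
      using car[OF mi[OF a]] ri[OF a] z by (simp add: scalar_prod_def lessThan_atLeast0)
    also have "\<dots> = 0" using ker[OF mi[OF a]] ri[OF a] by simp
    finally show "(M *\<^sub>v y) $ a = 0\<^sub>v m $ a" using a by simp
  qed (use M in simp)
  then have "y = 0\<^sub>v m" using det_0_iff_vec_prod_zero_field[OF M] nonsingular y unfolding M_def by blast
  have on_minor: "z $ ci b = 0" if "b < m" for b
    using arg_cong[OF \<open>y = 0\<^sub>v m\<close>, of "\<lambda>x. x $ b"] that unfolding y_def by simp
  show ?thesis
  proof (rule eq_vecI)
    fix j assume "j < dim_vec (0\<^sub>v d :: 'a vec)"
    then have j: "j < d" by simp
    show "z $ j = 0\<^sub>v d $ j"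
      using off[OF j] on_minor j by (cases "j \<in> ci ` {..<m}") auto
  qed (use z in simp)
qed

lemma common_kernel_dim_le_of_minor:
  fixes As :: "'a::field mat list"
  assumes "0 < n" and car: "\<And>i. i < n \<Longrightarrow> As ! i \<in> carrier_mat d d"
    and mi: "\<And>a. a < m \<Longrightarrow> mi a < n" and ri: "\<And>a. a < m \<Longrightarrow> ri a < d"
    and ci: "\<And>b. b < m \<Longrightarrow> ci b < d" and inj: "inj_on ci {..<m}"
    and nonsingular: "det (tuple_minor As mi ri ci m) \<noteq> 0"
    and cc: "\<And>t. t < e \<Longrightarrow> cc t < d"
    and cover: "\<And>j. j < d \<Longrightarrow> j \<in> ci ` {..<m} \<or> j \<in> cc ` {..<e}"
  shows "subspace_dim d (\<Inter>i\<in>{..<n}. mat_kernel (As ! i)) \<le> e"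
proof -
  have sub: "subspace class_ring (\<Inter>i\<in>{..<n}. mat_kernel (As ! i)) (module_vec TYPE('a) d)"
    by (rule subspace_common_kernel[of 0]) (use \<open>0 < n\<close> car in auto)
  show ?thesis
  proof (rule subspace_dim_le_of_coordinates[OF sub cc])
    fix w assume w: "w \<in> (\<Inter>i\<in>{..<n}. mat_kernel (As ! i))"
      and free: "\<And>t. t < e \<Longrightarrow> w $ cc t = 0"
    show "w = 0\<^sub>v d"
    proof (rule common_kernel_eq_0_of_vanishing_off_minor[OF car mi ri ci inj nonsingular])
      show "w \<in> carrier_vec d" using mat_kernelD(1)[OF car[OF \<open>0 < n\<close>]] w \<open>0 < n\<close> by blast
      show "As ! i *\<^sub>v w = 0\<^sub>v d" if "i < n" for i using mat_kernelD(2)[OF car[OF that]] w that by blast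
      show "w $ j = 0" if "j < d" "j \<notin> ci ` {..<m}" for j using cover[OF that(1)] that(2) free by blast
    qed
  qed
qed

lemma common_kernel_dim_le_of_intertwining:
  fixes A B :: "'i \<Rightarrow> 'a::field mat"
  assumes "i0 \<in> I" and A: "\<And>i. i \<in> I \<Longrightarrow> A i \<in> carrier_mat d d"
    and B: "\<And>i. i \<in> I \<Longrightarrow> B i \<in> carrier_mat d d"
    and P: "P \<in> carrier_mat d d" and Pinv: "Pinv \<in> carrier_mat d d" and inv: "Pinv * P = 1\<^sub>m d"
    and intertwine: "\<And>i. i \<in> I \<Longrightarrow> A i * P = P * B i"
  shows "subspace_dim d (\<Inter>i\<in>I. mat_kernel (B i)) \<le> subspace_dim d (\<Inter>i\<in>I. mat_kernel (A i))"
proof (rule subspace_dim_le_of_linear_inj)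
  show "subspace class_ring (\<Inter>i\<in>I. mat_kernel (B i)) (module_vec TYPE('a) d)"
    by (rule subspace_common_kernel[OF \<open>i0 \<in> I\<close> B])
  show "subspace class_ring (\<Inter>i\<in>I. mat_kernel (A i)) (module_vec TYPE('a) d)"
    by (rule subspace_common_kernel[OF \<open>i0 \<in> I\<close> A])
  have carrier: "v \<in> carrier_vec d" if "v \<in> (\<Inter>i\<in>I. mat_kernel (B i))" for v
    using mat_kernelD(1)[OF B[OF \<open>i0 \<in> I\<close>] INT_D[OF that \<open>i0 \<in> I\<close>]] .
  show "P *\<^sub>v v \<in> (\<Inter>i\<in>I. mat_kernel (A i))" if v: "v \<in> (\<Inter>i\<in>I. mat_kernel (B i))" for v
  proof (rule INT_I)
    fix i assume i: "i \<in> I"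
    have "A i *\<^sub>v (P *\<^sub>v v) = (A i * P) *\<^sub>v v" using A[OF i] P carrier[OF v] by simp
    also have "\<dots> = P *\<^sub>v (B i *\<^sub>v v)" unfolding intertwine[OF i] using B[OF i] P carrier[OF v] by simp
    also have "B i *\<^sub>v v = 0\<^sub>v d" using mat_kernelD(2)[OF B[OF i] INT_D[OF v i]] .
    also have "P *\<^sub>v 0\<^sub>v d = 0\<^sub>v d" using P by (intro eq_vecI) simp_all
    finally show "P *\<^sub>v v \<in> mat_kernel (A i)" using A[OF i] P carrier[OF v] by (intro mat_kernelI) auto
  qed
  show "P *\<^sub>v (v + w) = P *\<^sub>v v + P *\<^sub>v w"
    if "v \<in> (\<Inter>i\<in>I. mat_kernel (B i))" "w \<in> (\<Inter>i\<in>I. mat_kernel (B i))" for v w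
    using mult_add_distrib_mat_vec[OF P carrier[OF that(1)] carrier[OF that(2)]] .
  show "P *\<^sub>v (c \<cdot>\<^sub>v v) = c \<cdot>\<^sub>v (P *\<^sub>v v)" if "v \<in> (\<Inter>i\<in>I. mat_kernel (B i))" for c v
    using mult_mat_vec[OF P carrier[OF that]] .
  show "inj_on (\<lambda>v. P *\<^sub>v v) (\<Inter>i\<in>I. mat_kernel (B i))"
  proof (rule inj_on_inverseI)
    fix v assume "v \<in> (\<Inter>i\<in>I. mat_kernel (B i))"
    then have v: "v \<in> carrier_vec d" by (rule carrier)
    have "Pinv *\<^sub>v (P *\<^sub>v v) = (Pinv * P) *\<^sub>v v" using Pinv P v by simp
    also have "\<dots> = v" using inv v by simp
    finally show "Pinv *\<^sub>v (P *\<^sub>v v) = v" .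
  qed
qed

section \<open>Tuples in block form\<close>

lemma sum_lessThan_supported_Suc:
  fixes f :: "nat \<Rightarrow> 'a::comm_monoid_add"
  assumes "r < d" and support: "\<And>k. k < d \<Longrightarrow> k = 0 \<or> r < k \<Longrightarrow> f k = 0"
  shows "(\<Sum>k<d. f k) = (\<Sum>k<r. f (Suc k))"
proof -
  have "(\<Sum>k<d. f k) = (\<Sum>k\<in>{Suc 0..<Suc r}. f k)"
    by (rule sum.mono_neutral_right) (use assms in auto)
  also have "\<dots> = (\<Sum>k\<in>{0..<r}. f (Suc k))" by (rule sum.shift_bounds_Suc_ivl)
  finally show ?thesis by (simp add: lessThan_atLeast0)
qed

lemma block_shape_entry_eq_0:
  assumes "block_shape n r B" "j < n + r + 2" "k \<le> r" "j \<noteq> 0 \<or> k = 0"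
  shows "B $$ (j, k) = 0"
proof (rule ccontr)
  assume "B $$ (j, k) \<noteq> 0"
  moreover have "k < n + r + 2" using \<open>k \<le> r\<close> by simp
  ultimately have "(j = 0 \<and> 1 \<le> k \<and> k \<le> r + n) \<or> (1 \<le> j \<and> j \<le> r \<and> r + 1 \<le> k \<and> k \<le> r + n) \<or>
      (r + 1 \<le> j \<and> j \<le> r + n \<and> k = r + n + 1)"
    using assms(1,2) unfolding block_shape_def by blast
  then show False using assms(3,4) by linarith
qed

lemma block_shape_mult_vec:
  fixes B :: "'a::field mat"
  assumes B: "block_shape n r B" and v: "v \<in> carrier_vec (n + r + 2)"
    and low: "\<And>k. r < k \<Longrightarrow> k < n + r + 2 \<Longrightarrow> v $ k = 0"
  shows "B *\<^sub>v v = (blk_b n r B \<bullet> vec r (\<lambda>k. v $ Suc k)) \<cdot>\<^sub>v unit_vec (n + r + 2) 0"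
proof -
  have Bc: "B \<in> carrier_mat (n + r + 2) (n + r + 2)" using B unfolding block_shape_def by simp
  show ?thesis
  proof (rule eq_vecI)
    fix j assume "j < dim_vec ((blk_b n r B \<bullet> vec r (\<lambda>k. v $ Suc k)) \<cdot>\<^sub>v unit_vec (n + r + 2) 0)"
    then have j: "j < n + r + 2" by simp
    have "(B *\<^sub>v v) $ j = (\<Sum>k<n + r + 2. B $$ (j, k) * v $ k)"
      using Bc j v by (simp add: scalar_prod_def lessThan_atLeast0)
    also have "\<dots> = (\<Sum>k<r. B $$ (j, Suc k) * v $ Suc k)"
      by (rule sum_lessThan_supported_Suc) (use block_shape_entry_eq_0[OF B j] low in auto)
    also have "\<dots> = ((blk_b n r B \<bullet> vec r (\<lambda>k. v $ Suc k)) \<cdot>\<^sub>v unit_vec (n + r + 2) 0) $ j"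
    proof (cases "j = 0")
      case True
      then show ?thesis by (simp add: blk_b_def scalar_prod_def lessThan_atLeast0)
    next
      case False
      then show ?thesis using j block_shape_entry_eq_0[OF B j] by simp
    qed
    finally show "(B *\<^sub>v v) $ j = ((blk_b n r B \<bullet> vec r (\<lambda>k. v $ Suc k)) \<cdot>\<^sub>v unit_vec (n + r + 2) 0) $ j" .
  qed (use Bc in simp)
qed

lemma mat_kernel_block_shapeI:
  fixes B :: "'a::field mat"
  assumes B: "block_shape n r B" and v: "v \<in> carrier_vec (n + r + 2)"
    and low: "\<And>k. r < k \<Longrightarrow> k < n + r + 2 \<Longrightarrow> v $ k = 0"
    and orth: "blk_b n r B \<bullet> vec r (\<lambda>k. v $ Suc k) = 0"
  shows "v \<in> mat_kernel B"
proof (rule mat_kernelI)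
  show "B \<in> carrier_mat (n + r + 2) (n + r + 2)" using B unfolding block_shape_def by simp
  have "B *\<^sub>v v = 0 \<cdot>\<^sub>v unit_vec (n + r + 2) 0" using block_shape_mult_vec[OF B v low] unfolding orth .
  also have "\<dots> = 0\<^sub>v (n + r + 2)" by (intro eq_vecI) simp_all
  finally show "B *\<^sub>v v = 0\<^sub>v (n + r + 2)" .
qed (rule v)

lemma scalar_prod_shift:
  fixes b v :: "'a::comm_semiring_0 vec"
  assumes b: "b \<in> carrier_vec r" and v: "v \<in> carrier_vec d" and "r < d"
  shows "vec d (\<lambda>j. if 1 \<le> j \<and> j \<le> r then b $ (j - 1) else 0) \<bullet> v = b \<bullet> vec r (\<lambda>k. v $ Suc k)"
proof -
  let ?b = "vec d (\<lambda>j. if 1 \<le> j \<and> j \<le> r then b $ (j - 1) else 0)"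
  have "?b \<bullet> v = (\<Sum>j<d. ?b $ j * v $ j)" using v by (simp add: scalar_prod_def lessThan_atLeast0)
  also have "\<dots> = (\<Sum>k<r. ?b $ Suc k * v $ Suc k)"
    by (rule sum_lessThan_supported_Suc) (use \<open>r < d\<close> in auto)
  also have "\<dots> = b \<bullet> vec r (\<lambda>k. v $ Suc k)"
    using b \<open>r < d\<close> by (simp add: scalar_prod_def lessThan_atLeast0)
  finally show ?thesis .
qed

lemma prefix_orthogonal_mat_kernel:
  fixes S :: "'a::field vec set"
  assumes S: "finite S" "S \<subseteq> carrier_vec r" and "r < d"
  obtains ws where "set ws \<subseteq> carrier_vec d" "length ws = subspace_dim r (vspan r S) + (d - Suc r)"
    and "\<And>v k. v \<in> mat_kernel (mat_of_rows d ws) \<Longrightarrow> r < k \<Longrightarrow> k < d \<Longrightarrow> v $ k = 0"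
    and "\<And>v b. v \<in> mat_kernel (mat_of_rows d ws) \<Longrightarrow> b \<in> S \<Longrightarrow> b \<bullet> vec r (\<lambda>k. v $ Suc k) = 0"
proof -
  interpret R: vec_space "TYPE('a)" r .
  obtain bs where bs: "set bs \<subseteq> carrier_vec r" "length bs = subspace_dim r (vspan r S)"
    "vspan r (set bs) = vspan r S"
    using vspan_basis_list[OF S] .
  define lift where "lift b = vec d (\<lambda>j. if 1 \<le> j \<and> j \<le> r then b $ (j - 1) else 0)" for b :: "'a vec"
  define ws where "ws = map lift bs @ map (unit_vec d) [Suc r..<d]"
  have ws: "set ws \<subseteq> carrier_vec d" unfolding ws_def lift_def by auto
  have ann: "v \<in> carrier_vec d" "\<And>w. w \<in> set ws \<Longrightarrow> w \<bullet> v = 0"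
    if "v \<in> mat_kernel (mat_of_rows d ws)" for v
    using that unfolding mat_kernel_mat_of_rows[OF ws] by auto
  show ?thesis
  proof (rule that[OF ws])
    show "length ws = subspace_dim r (vspan r S) + (d - Suc r)" unfolding ws_def using bs(2) by simp
    show "v $ k = 0" if "v \<in> mat_kernel (mat_of_rows d ws)" "r < k" "k < d" for v k
    proof -
      have "unit_vec d k \<in> set ws" unfolding ws_def using that(2,3) by auto
      then have "unit_vec d k \<bullet> v = 0" by (rule ann(2)[OF that(1)])
      then show ?thesis using ann(1)[OF that(1)] that(3) by simp
    qed
    show "b \<bullet> vec r (\<lambda>k. v $ Suc k) = 0" if v: "v \<in> mat_kernel (mat_of_rows d ws)" and "b \<in> S" for v b
    proof (rule orthogonal_vspan[OF bs(1)])
      show "vec r (\<lambda>k. v $ Suc k) \<in> carrier_vec r" by simp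
      show "b' \<bullet> vec r (\<lambda>k. v $ Suc k) = 0" if "b' \<in> set bs" for b'
      proof -
        have "lift b' \<in> set ws" unfolding ws_def using that by auto
        then have "lift b' \<bullet> v = 0" by (rule ann(2)[OF v])
        then show ?thesis using scalar_prod_shift[OF subsetD[OF bs(1) that] ann(1)[OF v] \<open>r < d\<close>]
          unfolding lift_def by simp
      qed
      show "b \<in> vspan r (set bs)"
        unfolding bs(3) using R.in_own_span[OF S(2)] \<open>b \<in> S\<close> unfolding vspan_def by blast
    qed
  qed
qed

lemma block_shape_common_kernel_dim_ge:
  fixes Bs :: "'a::field mat list"
  assumes "0 < n" and len: "length Bs = n" and blocks: "\<And>i. i < n \<Longrightarrow> block_shape n r (Bs ! i)"
  shows "r + 1 - subspace_dim r (vspan r (set (map (blk_b n r) Bs)))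
    \<le> subspace_dim (n + r + 2) (\<Inter>i\<in>{..<n}. mat_kernel (Bs ! i))"
proof -
  define d where "d = n + r + 2"
  define S where "S = set (map (blk_b n r) Bs)"
  have S: "finite S" "S \<subseteq> carrier_vec r" unfolding S_def blk_b_def by auto
  have "r < d" unfolding d_def by simp
  obtain ws where ws: "set ws \<subseteq> carrier_vec d" "length ws = subspace_dim r (vspan r S) + (d - Suc r)"
    and low: "\<And>v k. v \<in> mat_kernel (mat_of_rows d ws) \<Longrightarrow> r < k \<Longrightarrow> k < d \<Longrightarrow> v $ k = 0"
    and orth: "\<And>v b. v \<in> mat_kernel (mat_of_rows d ws) \<Longrightarrow> b \<in> S \<Longrightarrow> b \<bullet> vec r (\<lambda>k. v $ Suc k) = 0"
    using prefix_orthogonal_mat_kernel[OF S \<open>r < d\<close>] by blast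
  have "mat_kernel (mat_of_rows d ws) \<subseteq> (\<Inter>i\<in>{..<n}. mat_kernel (Bs ! i))"
  proof (intro subsetI INT_I mat_kernel_block_shapeI)
    fix v i assume v: "v \<in> mat_kernel (mat_of_rows d ws)" and "i \<in> {..<n}"
    then show "block_shape n r (Bs ! i)" using blocks by simp
    show "v \<in> carrier_vec (n + r + 2)" using mat_kernelD(1)[OF mat_of_rows_carrier(1) v] unfolding d_def .
    show "v $ k = 0" if "r < k" "k < n + r + 2" for k using low[OF v] that unfolding d_def by simp
    have "blk_b n r (Bs ! i) \<in> S" unfolding S_def using \<open>i \<in> {..<n}\<close> len by simp
    then show "blk_b n r (Bs ! i) \<bullet> vec r (\<lambda>k. v $ Suc k) = 0" by (rule orth[OF v])
  qed
  then have "subspace_dim d (mat_kernel (mat_of_rows d ws)) \<le> subspace_dim d (\<Inter>i\<in>{..<n}. mat_kernel (Bs ! i))"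
  proof (rule subspace_dim_mono[rotated 2])
    show "subspace class_ring (mat_kernel (mat_of_rows d ws)) (module_vec TYPE('a) d)"
      by (rule subspace_mat_kernel[OF mat_of_rows_carrier(1)])
    show "subspace class_ring (\<Inter>i\<in>{..<n}. mat_kernel (Bs ! i)) (module_vec TYPE('a) d)"
      by (rule subspace_common_kernel[of 0]) (use \<open>0 < n\<close> blocks in \<open>auto simp: block_shape_def d_def\<close>)
  qed
  moreover have "d - length ws \<le> subspace_dim d (mat_kernel (mat_of_rows d ws))"
    by (rule mat_kernel_dim_ge[OF mat_of_rows_carrier(1)])
  moreover have "d - length ws = r + 1 - subspace_dim r (vspan r S)"
    unfolding ws(2) d_def using \<open>0 < n\<close> by simp
  ultimately show ?thesis unfolding d_def S_def by simp
qed

lemma mult_conj_mat: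
  fixes A P Pinv :: "'a::semiring_1 mat"
  assumes A: "A \<in> carrier_mat d d" and P: "P \<in> carrier_mat d d" "Pinv \<in> carrier_mat d d"
    and "P * Pinv = 1\<^sub>m d"
  shows "A * P = P * (Pinv * A * P)"
proof -
  have "P * (Pinv * A * P) = P * (Pinv * (A * P))" using A P by simp
  also have "\<dots> = (P * Pinv) * (A * P)"
    by (rule assoc_mult_mat[symmetric, OF P mult_carrier_mat[OF A P(1)]])
  also have "\<dots> = A * P"
    unfolding \<open>P * Pinv = 1\<^sub>m d\<close> by (rule left_mult_one_mat[OF mult_carrier_mat[OF A P(1)]])
  finally show ?thesis by simp
qed

lemma X_nrs_common_kernel_dim_ge:
  fixes As :: "'a::field mat list"
  assumes X: "As \<in> X_nrs n r s" and "0 < n"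
  shows "r + 1 - s \<le> subspace_dim (n + r + 2) (\<Inter>i\<in>{..<n}. mat_kernel (As ! i))"
proof -
  define d where "d = n + r + 2"
  from X have "\<exists>P Pinv. P \<in> carrier_mat d d \<and> Pinv \<in> carrier_mat d d \<and>
      P * Pinv = 1\<^sub>m d \<and> Pinv * P = 1\<^sub>m d \<and>
      (\<forall>i<n. block_shape n r (map (\<lambda>A. Pinv * A * P) As ! i)) \<and>
      subspace_dim r (vspan r (set (map (blk_b n r) (map (\<lambda>A. Pinv * A * P) As)))) = s"
    unfolding X_nrs_def Let_def d_def by blast
  then obtain P Pinv where P: "P \<in> carrier_mat d d" "Pinv \<in> carrier_mat d d"
      "P * Pinv = 1\<^sub>m d" "Pinv * P = 1\<^sub>m d"
    and blocks: "\<forall>i<n. block_shape n r (map (\<lambda>A. Pinv * A * P) As ! i)"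
    and dim_b: "subspace_dim r (vspan r (set (map (blk_b n r) (map (\<lambda>A. Pinv * A * P) As)))) = s"
    by blast
  have len: "length As = n" and car: "\<And>i. i < n \<Longrightarrow> As ! i \<in> carrier_mat d d"
    using X unfolding X_nrs_def d_def by auto
  define Bs where "Bs = map (\<lambda>A. Pinv * A * P) As"
  have "r + 1 - s \<le> subspace_dim d (\<Inter>i\<in>{..<n}. mat_kernel (Bs ! i))"
    using block_shape_common_kernel_dim_ge[of n Bs r] \<open>0 < n\<close> len blocks dim_b
    unfolding Bs_def d_def by simp
  also have "\<dots> \<le> subspace_dim d (\<Inter>i\<in>{..<n}. mat_kernel (As ! i))"
  proof (rule common_kernel_dim_le_of_intertwining[where P = P and Pinv = Pinv])
    show "0 \<in> {..<n}" using \<open>0 < n\<close> by simp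
    show "As ! i \<in> carrier_mat d d" if "i \<in> {..<n}" for i using car that by simp
    show "Bs ! i \<in> carrier_mat d d" if "i \<in> {..<n}" for i
      using that len mult_carrier_mat[OF mult_carrier_mat[OF P(2) car] P(1)] by (simp add: Bs_def)
    show "As ! i * P = P * Bs ! i" if "i \<in> {..<n}" for i
      using mult_conj_mat[OF car P(1,2,3)] that len by (simp add: Bs_def)
  qed (use P in simp_all)
  finally show ?thesis unfolding d_def .
qed

section \<open>Polynomial functions of the entries\<close>

lemma polyfun_sum:
  assumes "finite A" "\<And>a. a \<in> A \<Longrightarrow> f a \<in> polyfun"
  shows "(\<lambda>x. \<Sum>a\<in>A. f a x) \<in> polyfun"
  using assms
proof (induction A rule: finite_induct)
  case empty
  then show ?case by (simp add: polyfun.const)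
next
  case (insert a A)
  then have "(\<lambda>x. f a x + (\<Sum>a\<in>A. f a x)) \<in> polyfun" by (intro polyfun.add) auto
  with insert show ?case by simp
qed

lemma polyfun_prod:
  assumes "finite A" "\<And>a. a \<in> A \<Longrightarrow> f a \<in> polyfun"
  shows "(\<lambda>x. \<Prod>a\<in>A. f a x) \<in> polyfun"
  using assms
proof (induction A rule: finite_induct)
  case empty
  then show ?case by (simp add: polyfun.const)
next
  case (insert a A)
  then have "(\<lambda>x. f a x * (\<Prod>a\<in>A. f a x)) \<in> polyfun" by (intro polyfun.mult) auto
  with insert show ?case by simp
qed

lemma polyfun_det_coords:
  fixes g :: "nat \<Rightarrow> nat \<Rightarrow> 'v"
  shows "(\<lambda>x :: 'v \<Rightarrow> 'a::comm_ring_1. det (mat m m (\<lambda>(a, b). x (g a b)))) \<in> polyfun"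
proof -
  have "det (mat m m (\<lambda>(a, b). x (g a b))) =
      (\<Sum>p\<in>{p. p permutes {0..<m}}. signof p * (\<Prod>i\<in>{0..<m}. x (g i (p i))))" for x :: "'v \<Rightarrow> 'a"
    unfolding det_def by (auto intro!: sum.cong prod.cong simp: permutes_in_image)
  moreover have "(\<lambda>x :: 'v \<Rightarrow> 'a. \<Sum>p\<in>{p. p permutes {0..<m}}. signof p * (\<Prod>i\<in>{0..<m}. x (g i (p i))))
      \<in> polyfun"
    by (intro polyfun_sum polyfun.mult polyfun.const polyfun_prod polyfun.var finite_permutations) simp_all
  ultimately show ?thesis by simp
qed

lemma zariski_open_nonzero: "p \<in> polyfun \<Longrightarrow> zariski_open {x. p x \<noteq> 0}"
  unfolding zariski_open_def by (intro exI[of _ "{p}"]) auto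

lemma tuple_coords_minor:
  assumes "\<And>a. a < m \<Longrightarrow> mi a < n" "\<And>a. a < m \<Longrightarrow> ri a < d" "\<And>b. b < m \<Longrightarrow> ci b < d"
  shows "mat m m (\<lambda>(a, b). tuple_coords n d As (mi a, ri a, ci b)) = tuple_minor As mi ri ci m"
  unfolding tuple_coords_def tuple_minor_def using assms by (intro eq_matI) auto

section \<open>A distinguished minor and a model tuple\<close>

(*
  Row a of the distinguished minor is row 0 of A_a (the entries of b_a) for a < s; for a = s + l
  it is the row of A_l holding its D- or c-entry in column r+1+l (row l+1 if l < r, row 0
  otherwise); the last row is row r+1 of A_0, which holds an entry of f_0.
*)
definition minor_mat :: "nat \<Rightarrow> nat \<Rightarrow> nat \<Rightarrow> nat" where
  "minor_mat s n a = (if a < s then a else if a < s + n then a - s else 0)"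

definition minor_row :: "nat \<Rightarrow> nat \<Rightarrow> nat \<Rightarrow> nat \<Rightarrow> nat" where
  "minor_row r s n a =
     (if a < s then 0 else if a < s + n then (if a - s < r then a - s + 1 else 0) else r + 1)"

definition minor_col :: "nat \<Rightarrow> nat \<Rightarrow> nat \<Rightarrow> nat \<Rightarrow> nat" where
  "minor_col r s n b = (if b < s then b + 1 else if b < s + n then r + 1 + (b - s) else r + n + 1)"

definition free_col :: "nat \<Rightarrow> nat \<Rightarrow> nat" where
  "free_col s t = (if t = 0 then 0 else s + t)"

definition minor_locus :: "nat \<Rightarrow> nat \<Rightarrow> nat \<Rightarrow> (nat \<times> nat \<times> nat \<Rightarrow> 'a::comm_ring_1) set" where
  "minor_locus n r s = {x. det (mat (n + s + 1) (n + s + 1)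
     (\<lambda>(a, b). x (minor_mat s n a, minor_row r s n a, minor_col r s n b))) \<noteq> 0}"

lemma zariski_open_minor_locus: "zariski_open (minor_locus n r s)"
  unfolding minor_locus_def by (rule zariski_open_nonzero[OF polyfun_det_coords])

(* In block form: b_l = e_l for l < s, c_l = e_l for l >= r, D_l = E_ll for l < r, f_l = e_l,
   and all other blocks vanish. *)
definition model_entry :: "nat \<Rightarrow> nat \<Rightarrow> nat \<Rightarrow> nat \<Rightarrow> nat \<Rightarrow> nat \<Rightarrow> bool" where
  "model_entry n r s l j k \<longleftrightarrow> (j = 0 \<and> k = l + 1 \<and> l < s) \<or> (j = 0 \<and> k = r + 1 + l \<and> r \<le> l) \<or>
     (j = l + 1 \<and> k = r + 1 + l \<and> l < r) \<or> (j = r + 1 + l \<and> k = r + n + 1)"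

definition model_mat :: "nat \<Rightarrow> nat \<Rightarrow> nat \<Rightarrow> nat \<Rightarrow> 'a::field mat" where
  "model_mat n r s l = mat (n + r + 2) (n + r + 2) (\<lambda>(j, k). if model_entry n r s l j k then 1 else 0)"

definition model_tuple :: "nat \<Rightarrow> nat \<Rightarrow> nat \<Rightarrow> 'a::field mat list" where
  "model_tuple n r s = map (model_mat n r s) [0..<n]"

context
  fixes n r s :: nat
  assumes rs: "1 \<le> s" "s \<le> r" "r \<le> n"
begin

lemma minor_mat_lt: "a < n + s + 1 \<Longrightarrow> minor_mat s n a < n"
  using rs unfolding minor_mat_def by auto

lemma minor_row_lt: "a < n + s + 1 \<Longrightarrow> minor_row r s n a < n + r + 2"
  using rs unfolding minor_row_def by auto

lemma minor_col_lt: "b < n + s + 1 \<Longrightarrow> minor_col r s n b < n + r + 2"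
  using rs unfolding minor_col_def by auto

lemma free_col_lt: "t < r + 1 - s \<Longrightarrow> free_col s t < n + r + 2"
  using rs unfolding free_col_def by auto

lemma inj_on_minor_col: "inj_on (minor_col r s n) {..<n + s + 1}"
  using rs unfolding inj_on_def minor_col_def by (auto split: if_splits)

lemma minor_col_or_free_col:
  assumes "j < n + r + 2"
  shows "j \<in> minor_col r s n ` {..<n + s + 1} \<or> j \<in> free_col s ` {..<r + 1 - s}"
proof -
  consider "j = 0" | "1 \<le> j \<and> j \<le> s" | "s < j \<and> j \<le> r" | "r < j" using assms by linarith
  then show ?thesis
  proof cases
    case 1
    then have "j = free_col s 0" unfolding free_col_def by simp
    then show ?thesis using rs by auto
  next
    case 2
    then have "j = minor_col r s n (j - 1)" unfolding minor_col_def by auto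
    then show ?thesis using 2 rs by (intro disjI1 rev_image_eqI) auto
  next
    case 3
    then have "j = free_col s (j - s)" unfolding free_col_def by simp
    then show ?thesis using 3 by (intro disjI2 rev_image_eqI) auto
  next
    case 4
    then have "j = minor_col r s n (s + j - r - 1)" using assms rs unfolding minor_col_def by auto
    then show ?thesis using 4 assms by (intro disjI1 rev_image_eqI) auto
  qed
qed

lemma common_kernel_dim_le_of_nonsingular_minor:
  fixes As :: "'a::field mat list"
  assumes car: "\<And>i. i < n \<Longrightarrow> As ! i \<in> carrier_mat (n + r + 2) (n + r + 2)"
    and nonsingular: "det (tuple_minor As (minor_mat s n) (minor_row r s n) (minor_col r s n) (n + s + 1)) \<noteq> 0"
  shows "subspace_dim (n + r + 2) (\<Inter>i\<in>{..<n}. mat_kernel (As ! i)) \<le> r + 1 - s"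
  by (rule common_kernel_dim_le_of_minor[OF _ car _ _ _ inj_on_minor_col nonsingular free_col_lt
        minor_col_or_free_col])
    (use rs minor_mat_lt minor_row_lt minor_col_lt in auto)

lemma tuple_coords_in_minor_locus_iff:
  fixes As :: "'a::comm_ring_1 mat list"
  shows "tuple_coords n (n + r + 2) As \<in> minor_locus n r s \<longleftrightarrow>
    det (tuple_minor As (minor_mat s n) (minor_row r s n) (minor_col r s n) (n + s + 1)) \<noteq> 0"
proof -
  have "mat (n + s + 1) (n + s + 1) (\<lambda>(a, b). tuple_coords n (n + r + 2) As
      (minor_mat s n a, minor_row r s n a, minor_col r s n b)) =
    tuple_minor As (minor_mat s n) (minor_row r s n) (minor_col r s n) (n + s + 1)"
    by (rule tuple_coords_minor) (use minor_mat_lt minor_row_lt minor_col_lt in auto)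
  then show ?thesis unfolding minor_locus_def by simp
qed

lemma common_kernel_dim_eq_of_nonsingular_minor:
  fixes As :: "'a::field mat list"
  assumes X: "As \<in> X_nrs n r s"
    and nonsingular: "det (tuple_minor As (minor_mat s n) (minor_row r s n) (minor_col r s n) (n + s + 1)) \<noteq> 0"
  shows "subspace_dim (n + r + 2) (\<Inter>i\<in>{..<n}. mat_kernel (As ! i)) = r - s + 1"
proof -
  have car: "\<And>i. i < n \<Longrightarrow> As ! i \<in> carrier_mat (n + r + 2) (n + r + 2)"
    using X unfolding X_nrs_def by auto
  have "subspace_dim (n + r + 2) (\<Inter>i\<in>{..<n}. mat_kernel (As ! i)) \<le> r + 1 - s"
    by (rule common_kernel_dim_le_of_nonsingular_minor[OF car nonsingular])
  moreover have "r + 1 - s \<le> subspace_dim (n + r + 2) (\<Inter>i\<in>{..<n}. mat_kernel (As ! i))"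
    by (rule X_nrs_common_kernel_dim_ge[OF X]) (use rs in simp)
  ultimately show ?thesis using rs by linarith
qed

lemma model_entry_chain:
  "model_entry n r s l j k \<Longrightarrow> model_entry n r s l' k q \<Longrightarrow> l < n \<Longrightarrow> l' < n \<Longrightarrow> l = l'"
  using rs unfolding model_entry_def by auto

lemma model_mat_mult_eq_0:
  assumes "l < n" "l' < n" "l \<noteq> l'"
  shows "model_mat n r s l * model_mat n r s l' = (0\<^sub>m (n + r + 2) (n + r + 2) :: 'a::field mat)"
proof (rule eq_matI)
  fix j q assume "j < dim_row (0\<^sub>m (n + r + 2) (n + r + 2) :: 'a mat)"
    "q < dim_col (0\<^sub>m (n + r + 2) (n + r + 2) :: 'a mat)"
  then have jq: "j < n + r + 2" "q < n + r + 2" by auto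
  have "(model_mat n r s l * model_mat n r s l' :: 'a mat) $$ (j, q) =
      (\<Sum>k\<in>{0..<n + r + 2}. model_mat n r s l $$ (j, k) * model_mat n r s l' $$ (k, q))"
    using jq by (simp add: model_mat_def scalar_prod_def)
  also have "\<dots> = 0"
  proof (rule sum.neutral, intro ballI)
    fix k assume k: "k \<in> {0..<n + r + 2}"
    have "\<not> (model_entry n r s l j k \<and> model_entry n r s l' k q)"
      using model_entry_chain assms by blast
    then show "(model_mat n r s l $$ (j, k) * model_mat n r s l' $$ (k, q) :: 'a) = 0"
      using k jq unfolding model_mat_def by auto
  qed
  finally show "(model_mat n r s l * model_mat n r s l' :: 'a mat) $$ (j, q) =
      0\<^sub>m (n + r + 2) (n + r + 2) $$ (j, q)"
    using jq by simp
qed (auto simp: model_mat_def)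

lemma commuting_tuple_model_tuple: "commuting_tuple (model_tuple n r s :: 'a::field mat list)"
  unfolding commuting_tuple_def
proof (intro allI impI)
  fix i j assume "i < length (model_tuple n r s :: 'a mat list)" "j < length (model_tuple n r s :: 'a mat list)"
  then have ij: "i < n" "j < n" unfolding model_tuple_def by auto
  show "(model_tuple n r s :: 'a mat list) ! i * model_tuple n r s ! j =
      model_tuple n r s ! j * model_tuple n r s ! i"
  proof (cases "i = j")
    case False
    then have "(model_tuple n r s :: 'a mat list) ! i * model_tuple n r s ! j = 0\<^sub>m (n + r + 2) (n + r + 2)"
      "(model_tuple n r s :: 'a mat list) ! j * model_tuple n r s ! i = 0\<^sub>m (n + r + 2) (n + r + 2)"
      using model_mat_mult_eq_0[OF ij] model_mat_mult_eq_0[OF ij(2,1)] ij unfolding model_tuple_def by auto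
    then show ?thesis by simp
  qed simp
qed

lemma block_shape_model_mat: "l < n \<Longrightarrow> block_shape n r (model_mat n r s l)"
  unfolding block_shape_def model_mat_def model_entry_def using rs by auto

lemma blk_f_model_mat: "l < n \<Longrightarrow> blk_f n r (model_mat n r s l :: 'a::field mat) = unit_vec n l"
  unfolding blk_f_def model_mat_def model_entry_def unit_vec_def using rs by (intro eq_vecI) auto

lemma blk_b_model_mat:
  "l < n \<Longrightarrow> blk_b n r (model_mat n r s l :: 'a::field mat) = (if l < s then unit_vec r l else 0\<^sub>v r)"
  unfolding blk_b_def model_mat_def model_entry_def unit_vec_def using rs by (intro eq_vecI) auto

lemma blk_D_model_mat:
  "l < n \<Longrightarrow> blk_D n r (model_mat n r s l :: 'a::field mat) =
     mat r n (\<lambda>(j, k). if j = l \<and> k = l then 1 else 0)"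
  unfolding blk_D_def model_mat_def model_entry_def using rs by (intro eq_matI) auto

lemma lin_indep_family_blk_f_model_tuple:
  "lin_indep_family n (map (blk_f n r) (model_tuple n r s :: 'a::field mat list))"
proof -
  interpret vec_space "TYPE('a)" n .
  have "map (blk_f n r) (model_tuple n r s :: 'a mat list) = unit_vecs n"
    unfolding model_tuple_def unit_vecs_def by (auto simp: blk_f_model_mat)
  moreover have "\<not> lin_dep (set (unit_vecs n))" using unit_vecs_basis unfolding basis_def by auto
  ultimately show ?thesis
    unfolding lin_indep_family_def using unit_vecs_carrier unit_vecs_distinct by auto
qed

lemma common_kernel_blk_D_model_tuple:
  "(\<Inter>i\<in>{..<n}. mat_kernel (transpose_mat (blk_D n r ((model_tuple n r s :: 'a::field mat list) ! i))))
     = {0\<^sub>v r}"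
proof
  let ?D = "\<lambda>i. transpose_mat (blk_D n r ((model_tuple n r s :: 'a mat list) ! i))"
  have car: "?D i \<in> carrier_mat n r" for i unfolding blk_D_def by simp
  have "0\<^sub>v r \<in> mat_kernel (?D i)" for i
    using subspace_mat_kernel[OF car[of i], unfolded subspace_vec_iff] by (elim conjE)
  then show "{0\<^sub>v r} \<subseteq> (\<Inter>i\<in>{..<n}. mat_kernel (?D i))" by blast
  show "(\<Inter>i\<in>{..<n}. mat_kernel (?D i)) \<subseteq> {0\<^sub>v r}"
  proof
    fix u assume u: "u \<in> (\<Inter>i\<in>{..<n}. mat_kernel (?D i))"
    have "0 \<in> {..<n}" using rs by simp
    then have uc: "u \<in> carrier_vec r" using mat_kernelD(1)[OF car INT_D[OF u]] by simp
    have "u $ l = 0" if l: "l < r" for l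
    proof -
      have ln: "l < n" using l rs by simp
      have "?D l = transpose_mat (mat r n (\<lambda>(j, k). if j = l \<and> k = l then 1 else 0))"
        using ln unfolding model_tuple_def by (simp add: blk_D_model_mat)
      also have "\<dots> = mat n r (\<lambda>(k, j). if j = l \<and> k = l then 1 else 0)" by (intro eq_matI) auto
      finally have D: "?D l = mat n r (\<lambda>(k, j). if j = l \<and> k = l then 1 else 0)" .
      have "(?D l *\<^sub>v u) $ l = 0"
        using mat_kernelD(2)[OF car INT_D[OF u]] ln by simp
      moreover have "(?D l *\<^sub>v u) $ l = (\<Sum>j\<in>{0..<r}. (if j = l then 1 else 0) * u $ j)"
        using ln uc unfolding D by (simp add: scalar_prod_def)
      moreover have "\<dots> = (\<Sum>j\<in>{0..<r}. (if j = l then u $ j else 0))" by (rule sum.cong) auto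
      moreover have "\<dots> = u $ l" using l by simp
      ultimately show ?thesis by simp
    qed
    then show "u \<in> {0\<^sub>v r}" using uc by auto
  qed
qed

lemma subspace_dim_vspan_blk_b_model_tuple:
  "subspace_dim r (vspan r (set (map (blk_b n r) (model_tuple n r s :: 'a::field mat list)))) = s"
proof -
  interpret vec_space "TYPE('a)" r .
  define S where "S = set (map (blk_b n r) (model_tuple n r s :: 'a mat list))"
  define U where "U = (unit_vec r ` {..<s} :: 'a vec set)"
  have S: "S = (\<lambda>l. if l < s then unit_vec r l else 0\<^sub>v r) ` {..<n}"
    unfolding S_def model_tuple_def by (auto simp: blk_b_model_mat)
  then have "S \<subseteq> carrier_vec r" "finite S" "U \<subseteq> S" "S \<subseteq> insert (0\<^sub>v r) U"
    unfolding U_def using rs by force+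
  have "lin_indpt U"
  proof (rule subset_li_is_li)
    show "lin_indpt (set (unit_vecs r))" using unit_vecs_basis unfolding basis_def by auto
    show "U \<subseteq> set (unit_vecs r)" unfolding U_def unit_vecs_def using rs by auto
  qed
  have "maximal U (\<lambda>T. T \<subseteq> S \<and> lin_indpt T)"
    unfolding maximal_def
  proof (intro conjI allI impI)
    fix B assume B: "U \<subseteq> B \<and> B \<subseteq> S \<and> lin_indpt B"
    then have "0\<^sub>v r \<notin> B" using vs_zero_lin_dep[of B] \<open>S \<subseteq> carrier_vec r\<close> by auto
    then show "B = U" using B \<open>S \<subseteq> insert (0\<^sub>v r) U\<close> by auto
  qed (use \<open>U \<subseteq> S\<close> \<open>lin_indpt U\<close> in auto)
  then have "vectorspace.dim class_ring (vs (span S)) = card U"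
    by (rule dim_span[OF \<open>S \<subseteq> carrier_vec r\<close> \<open>finite S\<close>])
  moreover have "card U = s" unfolding U_def using rs by (subst card_image) (auto simp: inj_on_def)
  ultimately show ?thesis unfolding subspace_dim_def vspan_def S_def by simp
qed

lemma model_tuple_in_X_nrs: "(model_tuple n r s :: 'a::field mat list) \<in> X_nrs n r s"
proof -
  define d where "d = n + r + 2"
  have nth: "(model_tuple n r s :: 'a mat list) ! i = model_mat n r s i" if "i < n" for i
    unfolding model_tuple_def using that by simp
  have car: "(model_tuple n r s :: 'a mat list) ! i \<in> carrier_mat d d" if "i < n" for i
    unfolding nth[OF that] model_mat_def d_def by simp
  have conj_id: "map (\<lambda>A. 1\<^sub>m d * A * 1\<^sub>m d) (model_tuple n r s :: 'a mat list) = model_tuple n r s"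
    by (rule map_idI) (auto simp: model_tuple_def model_mat_def d_def)
  show ?thesis unfolding X_nrs_def Let_def
  proof (intro CollectI conjI exI[of _ "1\<^sub>m d"])
    show "\<forall>i<n. block_shape n r (map (\<lambda>A. 1\<^sub>m d * A * 1\<^sub>m d) (model_tuple n r s :: 'a mat list) ! i)"
      unfolding conj_id by (simp add: nth block_shape_model_mat)
  qed (unfold conj_id, use car commuting_tuple_model_tuple lin_indep_family_blk_f_model_tuple
      common_kernel_blk_D_model_tuple subspace_dim_vspan_blk_b_model_tuple
      in \<open>simp_all add: d_def model_tuple_def\<close>)
qed

lemma tuple_minor_model_tuple:
  "tuple_minor (model_tuple n r s :: 'a::field mat list) (minor_mat s n) (minor_row r s n) (minor_col r s n)
     (n + s + 1) = 1\<^sub>m (n + s + 1)"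
proof (rule eq_matI)
  fix a b assume "a < dim_row (1\<^sub>m (n + s + 1) :: 'a mat)" "b < dim_col (1\<^sub>m (n + s + 1) :: 'a mat)"
  then have ab: "a < n + s + 1" "b < n + s + 1" by auto
  have "model_entry n r s (minor_mat s n a) (minor_row r s n a) (minor_col r s n b) \<longleftrightarrow> a = b"
    using ab rs unfolding model_entry_def minor_mat_def minor_row_def minor_col_def by auto
  then show "tuple_minor (model_tuple n r s :: 'a mat list) (minor_mat s n) (minor_row r s n)
      (minor_col r s n) (n + s + 1) $$ (a, b) = 1\<^sub>m (n + s + 1) $$ (a, b)"
    using ab minor_mat_lt[OF ab(1)] minor_row_lt[OF ab(1)] minor_col_lt[OF ab(2)]
    unfolding tuple_minor_def model_tuple_def model_mat_def by simp
qed (simp_all add: tuple_minor_def)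

end

theorem lemma4p6:
  fixes n r s :: nat
  assumes alg_closed: "\<forall>p :: 'a::field_char_0 poly. degree p \<ge> 1 \<longrightarrow> (\<exists>x. poly p x = 0)"
    and "1 \<le> s" and "s \<le> r" and "r \<le> n"
  shows "holds_generally n (n+r+2) (X_nrs n r s :: 'a mat list set)
           (\<lambda>As. subspace_dim (n+r+2) (\<Inter>i\<in>{..<n}. mat_kernel (As!i)) = r - s + 1)"
proof -
  note rs = assms(2-4)
  show ?thesis unfolding holds_generally_def
  proof (intro exI[of _ "minor_locus n r s"] conjI bexI[of _ "model_tuple n r s"] ballI impI)
    show "zariski_open (minor_locus n r s :: (nat \<times> nat \<times> nat \<Rightarrow> 'a) set)"
      by (rule zariski_open_minor_locus)
    show "model_tuple n r s \<in> (X_nrs n r s :: 'a mat list set)" by (rule model_tuple_in_X_nrs[OF rs])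
    show "tuple_coords n (n + r + 2) (model_tuple n r s :: 'a mat list) \<in> minor_locus n r s"
      unfolding tuple_coords_in_minor_locus_iff[OF rs] tuple_minor_model_tuple[OF rs] by simp
    fix As :: "'a mat list"
    assume "As \<in> X_nrs n r s" "tuple_coords n (n + r + 2) As \<in> minor_locus n r s"
    then show "subspace_dim (n + r + 2) (\<Inter>i\<in>{..<n}. mat_kernel (As ! i)) = r - s + 1"
      unfolding tuple_coords_in_minor_locus_iff[OF rs]
      by (rule common_kernel_dim_eq_of_nonsingular_minor[OF rs])
  qed
qed

end
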